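(* For any integer $n\geq 4$, we have $\chi(\overline{K}(n,2))\leq h_o(\overline{K}(n,2))$, and $\overline{K}(n,2)$ contains a strongly $1$-shallow $K_t$-minor, where $t=n-1=\chi(\overline{K}(n,2))$ when $n$ is even and $t=n=\chi(\overline{K}(n,2))$ when $n$ is odd.
   Context: $\overline{K}(n,k)$ is the complement of the Kneser graph: its vertices are the $k$-element subsets of $[n]=\{1,\dots,n\}$, two distinct ones adjacent iff they intersect. $\chi$ is chromatic number. A $K_t$-minor of a graph $G$ is given by $t$ pairwise vertex-disjoint connected subgraphs (bags), any two joined by an edge of $G$. A star is $K_{1,s}$, $s\ge1$. A $K_t$-minor is strongly $1$-shallow if each bag is a single vertex or a star, and every two bags are joined by an edge each of whose endpoints is either the unique vertex of a single-vertex bag or a leaf of a star bag. Signed graphs: $(G,\sigma)$ with $\sigma:E(G)\to\{+,-\}$; switching at $x$ flips signs of edges at $x$. $(H,\pi)$ is a minor of $(G,\sigma)$ if for some $\tau$ switching equivalent to $\sigma$ there are disjoint subgraphs $B_x$ ($x\in V(H)$) whose $\tau$-positive edges span each $B_x$ connectedly, and for each edge $xy$ of $H$ an edge $uv$ with $u\in B_x,v\in B_y$ and $\tau(uv)=\pi(xy)$. $h_o(G)$ is the largest $t$ such that $(K_t,-)$ (all edges negative) is a minor of $(G,-)$. *)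

theory Defs
  imports Main
begin

text \<open>Simple graphs are given by a vertex set V and a symmetric irreflexive
adjacency predicate E (only its restriction to V matters).\<close>

definition conn_set :: "'a set \<Rightarrow> ('a \<Rightarrow> 'a \<Rightarrow> bool) \<Rightarrow> bool" where
  "conn_set C R \<longleftrightarrow> C \<noteq> {} \<and>
     (\<forall>u\<in>C. \<forall>v\<in>C. rtranclp (\<lambda>a b. a \<in> C \<and> b \<in> C \<and> R a b) u v)"

definition proper_colouring :: "'a set \<Rightarrow> ('a \<Rightarrow> 'a \<Rightarrow> bool) \<Rightarrow> nat \<Rightarrow> ('a \<Rightarrow> nat) \<Rightarrow> bool" where
  "proper_colouring V E k c \<longleftrightarrow>
     (\<forall>v\<in>V. c v < k) \<and> (\<forall>u\<in>V. \<forall>v\<in>V. E u v \<longrightarrow> c u \<noteq> c v)"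

definition chromatic_number :: "'a set \<Rightarrow> ('a \<Rightarrow> 'a \<Rightarrow> bool) \<Rightarrow> nat" where
  "chromatic_number V E = (LEAST k. \<exists>c. proper_colouring V E k c)"

text \<open>Complement of the Kneser graph: k-subsets of {1..n}, adjacent iff distinct and intersecting.\<close>

definition KC_V :: "nat \<Rightarrow> nat \<Rightarrow> nat set set" where
  "KC_V n k = {A. A \<subseteq> {1..n} \<and> card A = k}"

definition KC_E :: "nat set \<Rightarrow> nat set \<Rightarrow> bool" where
  "KC_E A B \<longleftrightarrow> A \<noteq> B \<and> A \<inter> B \<noteq> {}"

text \<open>Signed graphs: signatures are predicates on pairs, True = positive edge, False = negative.
Switching at a set S of vertices flips the sign of every edge with exactly one end in S.\<close>

definition switching_equiv :: "'a set \<Rightarrow> ('a \<Rightarrow> 'a \<Rightarrow> bool) \<Rightarrow> ('a \<Rightarrow> 'a \<Rightarrow> bool) \<Rightarrow> bool" where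
  "switching_equiv V sigma tau \<longleftrightarrow> (\<exists>S\<subseteq>V. \<forall>u\<in>V. \<forall>v\<in>V.
     tau u v = (if (u \<in> S) = (v \<in> S) then sigma u v else \<not> sigma u v))"

definition signed_minor ::
  "'a set \<Rightarrow> ('a \<Rightarrow> 'a \<Rightarrow> bool) \<Rightarrow> ('a \<Rightarrow> 'a \<Rightarrow> bool) \<Rightarrow>
   'b set \<Rightarrow> ('b \<Rightarrow> 'b \<Rightarrow> bool) \<Rightarrow> ('b \<Rightarrow> 'b \<Rightarrow> bool) \<Rightarrow> bool" where
  "signed_minor V E sigma W F pi \<longleftrightarrow>
     (\<exists>tau B. switching_equiv V sigma tau \<and>
        (\<forall>x\<in>W. B x \<subseteq> V \<and> conn_set (B x) (\<lambda>u v. E u v \<and> tau u v)) \<and>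
        (\<forall>x\<in>W. \<forall>y\<in>W. x \<noteq> y \<longrightarrow> B x \<inter> B y = {}) \<and>
        (\<forall>x\<in>W. \<forall>y\<in>W. F x y \<longrightarrow> (\<exists>u\<in>B x. \<exists>v\<in>B y. E u v \<and> tau u v = pi x y)))"

definition h_o :: "'a set \<Rightarrow> ('a \<Rightarrow> 'a \<Rightarrow> bool) \<Rightarrow> nat" where
  "h_o V E = (GREATEST t. signed_minor V E (\<lambda>_ _. False)
                 {..<t} (\<lambda>i j. i \<noteq> j) (\<lambda>_ _. False))"

text \<open>Bag i has centre c i and leaf set L i:
if L i is empty the bag is the single vertex c i, otherwise it is the star with
centre c i and leaves L i.\<close>

definition ports :: "('b \<Rightarrow> 'a) \<Rightarrow> ('b \<Rightarrow> 'a set) \<Rightarrow> 'b \<Rightarrow> 'a set" where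
  "ports c L i = (if L i = {} then {c i} else L i)"

definition strongly_1_shallow_minor :: "'a set \<Rightarrow> ('a \<Rightarrow> 'a \<Rightarrow> bool) \<Rightarrow> nat \<Rightarrow> bool" where
  "strongly_1_shallow_minor V E t \<longleftrightarrow>
     (\<exists>c L. (\<forall>i<t. c i \<in> V \<and> L i \<subseteq> V \<and> c i \<notin> L i \<and> (\<forall>l\<in>L i. E (c i) l)) \<and>
        (\<forall>i<t. \<forall>j<t. i \<noteq> j \<longrightarrow> insert (c i) (L i) \<inter> insert (c j) (L j) = {}) \<and>
        (\<forall>i<t. \<forall>j<t. i \<noteq> j \<longrightarrow> (\<exists>u\<in>ports c L i. \<exists>v\<in>ports c L j. E u v)))"

end

theory Submission
  imports Defs "HOL-Number_Theory.Cong"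
begin

(* A colour class of the complement of K(n,2) is a matching of K_n, hence has at most
   n div 2 vertices; counting the n choose 2 vertices gives chi >= n - 1 for even n and
   chi >= n for odd n, and a round-robin tournament schedule is a colouring attaining this.
   For the minor, the n - 1 pairs {i, n} form a clique, and the star with centre {1, 2}
   whose leaves are the other pairs of {1..n-1} meeting {1, 2} is disjoint from them and
   reaches each of them through a leaf: a strongly 1-shallow K_n-minor. Switching at the
   centres of the star bags makes all bags positively connected while the edges between
   ports, which never touch a centre, stay negative; so every strongly 1-shallow K_t-minor
   is a (K_t,-)-minor and h_o >= t. *)

lemma chromatic_number_eqI:
  assumes "proper_colouring V E k c"
    and "\<And>k' c'. proper_colouring V E k' c' \<Longrightarrow> k \<le> k'"
  shows "chromatic_number V E = k"
  unfolding chromatic_number_def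
  using assms by (blast intro: Least_equality)

lemma card_le_colours_times_independence:
  assumes "proper_colouring V E k f"
    and "\<And>I. I \<subseteq> V \<Longrightarrow> (\<forall>u\<in>I. \<forall>v\<in>I. \<not> E u v) \<Longrightarrow> card I \<le> a"
  shows "card V \<le> k * a"
proof -
  let ?class = "\<lambda>i. {v \<in> V. f v = i}"
  have "V = (\<Union>i<k. ?class i)"
    using assms(1) unfolding proper_colouring_def by auto
  then have "card V \<le> (\<Sum>i<k. card (?class i))"
    by (metis card_UN_le finite_lessThan)
  also have "\<dots> \<le> (\<Sum>i<k. a)"
    using assms unfolding proper_colouring_def
    by (intro sum_mono) (metis (mono_tags) mem_Collect_eq subsetI)
  finally show ?thesis by simp
qed

lemma conn_set_star:
  assumes "\<forall>l\<in>L. R c l \<and> R l c"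
  shows "conn_set (insert c L) R"
proof -
  let ?R = "\<lambda>a b. a \<in> insert c L \<and> b \<in> insert c L \<and> R a b"
  have "?R\<^sup>*\<^sup>* u c" "?R\<^sup>*\<^sup>* c u" if "u \<in> insert c L" for u
    using that assms by auto
  then show ?thesis
    unfolding conn_set_def by (blast intro: rtranclp_trans)
qed

lemma strongly_1_shallow_minor_mono:
  assumes "strongly_1_shallow_minor V E t" and "s \<le> t"
  shows "strongly_1_shallow_minor V E s"
proof -
  obtain c L where
    "\<forall>i<t. c i \<in> V \<and> L i \<subseteq> V \<and> c i \<notin> L i \<and> (\<forall>l\<in>L i. E (c i) l)"
    "\<forall>i<t. \<forall>j<t. i \<noteq> j \<longrightarrow> insert (c i) (L i) \<inter> insert (c j) (L j) = {}"
    "\<forall>i<t. \<forall>j<t. i \<noteq> j \<longrightarrow> (\<exists>u\<in>ports c L i. \<exists>v\<in>ports c L j. E u v)"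
    using assms(1) unfolding strongly_1_shallow_minor_def by blast
  then show ?thesis
    unfolding strongly_1_shallow_minor_def using \<open>s \<le> t\<close>
    by (intro exI[of _ c] exI[of _ L]) auto
qed

lemma all_negative_signed_minorI:
  assumes "S \<subseteq> V"
    and "\<And>i. i < t \<Longrightarrow> B i \<subseteq> V"
    and "\<And>i j. i < t \<Longrightarrow> j < t \<Longrightarrow> i \<noteq> j \<Longrightarrow> B i \<inter> B j = {}"
    and "\<And>i. i < t \<Longrightarrow> conn_set (B i) (\<lambda>u v. E u v \<and> (u \<in> S) \<noteq> (v \<in> S))"
    and "\<And>i j. i < t \<Longrightarrow> j < t \<Longrightarrow> i \<noteq> j \<Longrightarrow> \<exists>u\<in>B i. \<exists>v\<in>B j. E u v \<and> (u \<in> S) = (v \<in> S)"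
  shows "signed_minor V E (\<lambda>_ _. False) {..<t} (\<lambda>i j. i \<noteq> j) (\<lambda>_ _. False)"
proof -
  have "switching_equiv V (\<lambda>_ _. False) (\<lambda>u v. (u \<in> S) \<noteq> (v \<in> S))"
    unfolding switching_equiv_def using assms(1) by auto
  then show ?thesis
    unfolding signed_minor_def using assms(2-5)
    by (intro exI[of _ "\<lambda>u v. (u \<in> S) \<noteq> (v \<in> S)"] exI[of _ B]) auto
qed

lemma strongly_1_shallow_minor_imp_signed_minor:
  assumes "strongly_1_shallow_minor V E t" and sym: "\<And>u v. E u v \<Longrightarrow> E v u"
  shows "signed_minor V E (\<lambda>_ _. False) {..<t} (\<lambda>i j. i \<noteq> j) (\<lambda>_ _. False)"
proof -
  obtain c L where
    stars: "\<forall>i<t. c i \<in> V \<and> L i \<subseteq> V \<and> c i \<notin> L i \<and> (\<forall>l\<in>L i. E (c i) l)" and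
    disjs: "\<forall>i<t. \<forall>j<t. i \<noteq> j \<longrightarrow> insert (c i) (L i) \<inter> insert (c j) (L j) = {}" and
    adjs: "\<forall>i<t. \<forall>j<t. i \<noteq> j \<longrightarrow> (\<exists>u\<in>ports c L i. \<exists>v\<in>ports c L j. E u v)"
    using assms(1) unfolding strongly_1_shallow_minor_def by blast
  have star: "c i \<in> V \<and> L i \<subseteq> V \<and> c i \<notin> L i \<and> (\<forall>l\<in>L i. E (c i) l)" if "i < t" for i
    using stars that by blast
  have disj: "insert (c i) (L i) \<inter> insert (c j) (L j) = {}" if "i < t" "j < t" "i \<noteq> j" for i j
    using disjs that by blast
  define S where "S = {c i | i. i < t \<and> L i \<noteq> {}}"
  have ports_notin_S: "u \<notin> S" if "i < t" "u \<in> ports c L i" for i u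
  proof
    assume "u \<in> S"
    then obtain j where j: "j < t" "L j \<noteq> {}" "u = c j" unfolding S_def by auto
    have "u \<in> insert (c i) (L i)" using that unfolding ports_def by (auto split: if_splits)
    then have "i = j" using disj[OF \<open>i < t\<close> \<open>j < t\<close>] j by blast
    then show False using that j star unfolding ports_def by (auto split: if_splits)
  qed
  show ?thesis
  proof (rule all_negative_signed_minorI[where S = S and B = "\<lambda>i. insert (c i) (L i)"])
    show "S \<subseteq> V" using star unfolding S_def by auto
  next
    fix i assume "i < t"
    show "insert (c i) (L i) \<subseteq> V" using star[OF \<open>i < t\<close>] by simp
    show "conn_set (insert (c i) (L i)) (\<lambda>u v. E u v \<and> (u \<in> S) \<noteq> (v \<in> S))"
    proof (cases "L i = {}")
      case True
      then show ?thesis by (simp add: conn_set_star)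
    next
      case False
      then have "c i \<in> S" "\<forall>l\<in>L i. l \<notin> S"
        using \<open>i < t\<close> ports_notin_S[OF \<open>i < t\<close>] unfolding S_def ports_def by auto
      then show ?thesis
        using star[OF \<open>i < t\<close>] sym by (intro conn_set_star) auto
    qed
  next
    fix i j assume ij: "i < t" "j < t" "i \<noteq> j"
    then show "insert (c i) (L i) \<inter> insert (c j) (L j) = {}" by (rule disj)
    obtain u v where "u \<in> ports c L i" "v \<in> ports c L j" "E u v"
      using adjs ij by blast
    moreover have "ports c L k \<subseteq> insert (c k) (L k)" for k unfolding ports_def by auto
    ultimately show "\<exists>u\<in>insert (c i) (L i). \<exists>v\<in>insert (c j) (L j). E u v \<and> (u \<in> S) = (v \<in> S)"
      using ports_notin_S ij by blast
  qed
qed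

lemma signed_minor_card_le:
  assumes "finite V" and "signed_minor V E sigma {..<t} F pi"
  shows "t \<le> card V"
proof -
  obtain tau B where
    bags: "\<forall>i\<in>{..<t}. B i \<subseteq> V \<and> conn_set (B i) (\<lambda>u v. E u v \<and> tau u v)" and
    disj: "\<forall>i\<in>{..<t}. \<forall>j\<in>{..<t}. i \<noteq> j \<longrightarrow> B i \<inter> B j = {}"
    using assms(2) unfolding signed_minor_def by blast
  define f where "f i = (SOME u. u \<in> B i)" for i
  have f: "f i \<in> B i \<inter> V" if "i \<in> {..<t}" for i
  proof -
    have "B i \<noteq> {}" "B i \<subseteq> V" using bags that unfolding conn_set_def by auto
    then show ?thesis unfolding f_def by (metis IntI some_in_eq subsetD)
  qed
  have "inj_on f {..<t}"
  proof (rule inj_onI)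
    fix i j assume ij: "i \<in> {..<t}" "j \<in> {..<t}" "f i = f j"
    then have "B i \<inter> B j \<noteq> {}" using f[of i] f[of j] by auto
    then show "i = j" using disj ij(1,2) by blast
  qed
  then have "card (f ` {..<t}) = t"
    by (simp add: card_image)
  moreover have "f ` {..<t} \<subseteq> V"
    using f by blast
  ultimately show ?thesis
    using card_mono[OF assms(1)] by metis
qed

lemma le_h_oI:
  assumes "finite V"
    and "signed_minor V E (\<lambda>_ _. False) {..<t} (\<lambda>i j. i \<noteq> j) (\<lambda>_ _. False)"
  shows "t \<le> h_o V E"
  unfolding h_o_def using assms(2) signed_minor_card_le[OF assms(1)] by (rule Greatest_le_nat)

lemma strongly_1_shallow_minor_clique_star:
  assumes sym: "\<And>u v. E u v \<Longrightarrow> E v u"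
    and clique: "\<forall>i<t. v i \<in> V" "inj_on v {..<t}" "\<forall>i<t. \<forall>j<t. i \<noteq> j \<longrightarrow> E (v i) (v j)"
    and star: "c \<in> V" "L \<subseteq> V" "L \<noteq> {}" "c \<notin> L" "\<forall>l\<in>L. E c l"
    and outside: "\<forall>i<t. v i \<notin> insert c L"
    and dominated: "\<forall>i<t. \<exists>l\<in>L. E (v i) l"
  shows "strongly_1_shallow_minor V E (Suc t)"
proof -
  define c' where "c' i = (if i < t then v i else c)" for i
  define L' where "L' i = (if i < t then {} else L)" for i
  have ports: "ports c' L' i = (if i < t then {v i} else L)" for i
    using star(3) unfolding ports_def c'_def L'_def by simp
  have bag: "insert (c' i) (L' i) = (if i < t then {v i} else insert c L)" for i
    unfolding c'_def L'_def by simp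
  show ?thesis
    unfolding strongly_1_shallow_minor_def
  proof (intro exI[of _ c'] exI[of _ L'] conjI; intro allI impI)
    fix i assume "i < Suc t"
    then show "c' i \<in> V \<and> L' i \<subseteq> V \<and> c' i \<notin> L' i \<and> (\<forall>l\<in>L' i. E (c' i) l)"
      using clique(1) star unfolding c'_def L'_def by auto
  next
    fix i j assume "i < Suc t" "j < Suc t" "i \<noteq> j"
    then consider "i < t" "j < t" | "i < t" "j = t" | "i = t" "j < t" by linarith
    then show "insert (c' i) (L' i) \<inter> insert (c' j) (L' j) = {}"
      using \<open>i \<noteq> j\<close> clique(2) outside unfolding bag by cases (auto dest: inj_onD)
  next
    fix i j assume "i < Suc t" "j < Suc t" "i \<noteq> j"
    then consider "i < t" "j < t" | "i < t" "j = t" | "i = t" "j < t" by linarith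
    then show "\<exists>x\<in>ports c' L' i. \<exists>y\<in>ports c' L' j. E x y"
    proof cases
      case 1
      then show ?thesis using \<open>i \<noteq> j\<close> clique(3) by (simp add: ports)
    next
      case 2
      then show ?thesis using dominated by (simp add: ports)
    next
      case 3
      then obtain l where "l \<in> L" "E (v j) l" using dominated by blast
      then show ?thesis using 3 sym by (auto simp: ports)
    qed
  qed
qed

lemma finite_KC_V: "finite (KC_V n k)"
  unfolding KC_V_def by (rule finite_subset[of _ "Pow {1..n}"]) auto

lemma card_KC_V: "card (KC_V n k) = n choose k"
  unfolding KC_V_def using n_subsets[of "{1..n}" k] by simp

lemma KC_E_sym: "KC_E A B \<Longrightarrow> KC_E B A"
  unfolding KC_E_def by auto

lemma KC_V_mono: "m \<le> n \<Longrightarrow> KC_V m k \<subseteq> KC_V n k"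
proof -
  assume "m \<le> n"
  then have "{1..m} \<subseteq> {1..n}" by simp
  then show ?thesis unfolding KC_V_def by blast
qed

lemma doubleton_in_KC_V: "x \<noteq> y \<Longrightarrow> {x, y} \<in> KC_V n 2 \<longleftrightarrow> x \<in> {1..n} \<and> y \<in> {1..n}"
  unfolding KC_V_def by auto

lemma KC_independent_card:
  assumes "I \<subseteq> KC_V n k" and "\<forall>A\<in>I. \<forall>B\<in>I. \<not> KC_E A B"
  shows "card I * k \<le> n"
proof -
  have members: "finite A \<and> card A = k" if "A \<in> I" for A
    using that assms(1) unfolding KC_V_def by (auto intro: finite_subset)
  have "pairwise disjnt I"
    using assms(2) unfolding pairwise_def disjnt_def KC_E_def by blast
  then have "card (\<Union>I) = (\<Sum>A\<in>I. card A)"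
    using members by (intro card_Union_disjoint) auto
  also have "\<dots> = card I * k"
    using members by simp
  finally have "card I * k = card (\<Union>I)" by simp
  also have "\<dots> \<le> card {1..n}"
    using assms(1) unfolding KC_V_def by (intro card_mono) auto
  finally show ?thesis by simp
qed

lemma KC_colours_lower_bound:
  assumes "proper_colouring (KC_V n k) KC_E q f" and "k > 0"
  shows "n choose k \<le> q * (n div k)"
proof -
  have "card I \<le> n div k" if "I \<subseteq> KC_V n k" "\<forall>A\<in>I. \<forall>B\<in>I. \<not> KC_E A B" for I
    using KC_independent_card[OF that] \<open>k > 0\<close> by (simp add: less_eq_div_iff_mult_less_eq)
  then show ?thesis
    using card_le_colours_times_independence[OF assms(1)] card_KC_V by metis
qed

lemma choose_two_eq: "n choose 2 = n div 2 * (if even n then n - 1 else n)"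
proof (cases "even n")
  case True
  then obtain m where "n = 2 * m" by blast
  then show ?thesis by (cases m) (auto simp: choose_two algebra_simps)
next
  case False
  then obtain m where "n = 2 * m + 1" using oddE by blast
  then show ?thesis by (simp add: choose_two algebra_simps)
qed

lemma KC2_colours_lower_bound:
  assumes "proper_colouring (KC_V n 2) KC_E q f" and "n \<ge> 2"
  shows "(if even n then n - 1 else n) \<le> q"
proof -
  have "n div 2 * (if even n then n - 1 else n) \<le> n div 2 * q"
    using KC_colours_lower_bound[OF assms(1)] choose_two_eq by (simp add: mult.commute)
  moreover have "n div 2 > 0" using \<open>n \<ge> 2\<close> by simp
  ultimately show ?thesis by simp
qed

lemma cong_imp_eq_in_range:
  fixes x y m :: nat
  assumes "[x = y] (mod m)" "x \<in> {1..m}" "y \<in> {1..m}"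
  shows "x = y"
proof -
  have "w mod m = (if w = m then 0 else w)" if "w \<in> {1..m}" for w
    using that by auto
  then show ?thesis
    using assms by (auto simp: cong_def split: if_splits)
qed

lemma card_2_eq_insert: "card A = 2 \<Longrightarrow> x \<in> A \<Longrightarrow> \<exists>y. A = {x, y} \<and> x \<noteq> y"
  by (metis card_2_iff insert_commute insertE singletonD)

lemma KC_edge_cases:
  assumes "A \<in> KC_V n 2" "B \<in> KC_V n 2" "KC_E A B"
  obtains x y z where "A = {x, y}" "B = {x, z}" "distinct [x, y, z]" "{x, y, z} \<subseteq> {1..n}"
proof -
  obtain x where x: "x \<in> A" "x \<in> B" using assms(3) unfolding KC_E_def by auto
  have "card A = 2" "card B = 2" "A \<subseteq> {1..n}" "B \<subseteq> {1..n}"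
    using assms(1,2) unfolding KC_V_def by auto
  moreover obtain y where "A = {x, y}" "x \<noteq> y"
    using card_2_eq_insert[OF \<open>card A = 2\<close> x(1)] by blast
  moreover obtain z where "B = {x, z}" "x \<noteq> z"
    using card_2_eq_insert[OF \<open>card B = 2\<close> x(2)] by blast
  moreover have "y \<noteq> z" using assms(3) calculation unfolding KC_E_def by auto
  ultimately show ?thesis
    using that by simp
qed

lemma round_robin_colours_differ:
  fixes n x y z :: nat
  assumes "even n" and "n > 0" and "distinct [x, y, z]" and "{x, y, z} \<subseteq> {1..n}"
  shows "\<not> [(if x = n then 2 * y else if y = n then 2 * x else x + y) =
             (if x = n then 2 * z else if z = n then 2 * x else x + z)] (mod (n - 1))"
proof -
  define m where "m = n - 1"
  have "coprime 2 m" using assms(1,2) unfolding m_def by auto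
  have range: "w \<in> {1..m}" if "w \<in> {1..n}" "w \<noteq> n" for w
    using that unfolding m_def by auto
  consider "x = n" | "y = n" | "z = n" | "n \<notin> {x, y, z}" by auto
  then have "\<not> [(if x = n then 2 * y else if y = n then 2 * x else x + y) =
                 (if x = n then 2 * z else if z = n then 2 * x else x + z)] (mod m)"
  proof cases
    case 1
    then show ?thesis
      using assms(3,4) range cong_imp_eq_in_range[of y z m]
      by (auto simp: cong_mult_lcancel_nat[OF \<open>coprime 2 m\<close>])
  next
    case 2
    then show ?thesis
      using assms(3,4) range cong_imp_eq_in_range[of x z m] by (auto simp: mult_2 cong_add_lcancel_nat)
  next
    case 3
    then show ?thesis
      using assms(3,4) range cong_imp_eq_in_range[of x y m]
      by (auto simp: mult_2 cong_add_lcancel_nat cong_sym_eq)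
  next
    case 4
    then show ?thesis
      using assms(3,4) range cong_imp_eq_in_range[of y z m] by (auto simp: cong_add_lcancel_nat)
  qed
  then show ?thesis
    unfolding m_def .
qed

text \<open>A round-robin tournament schedule: for even n the pairs of {1..n-1} are coloured by
their sum mod n - 1, and {x, n} gets 2x mod (n - 1), the one colour missing at x.\<close>

definition KC2_colouring :: "nat \<Rightarrow> nat set \<Rightarrow> nat" where
  "KC2_colouring n A =
     (if odd n then \<Sum>A mod n
      else if n \<in> A then 2 * (\<Sum>A - n) mod (n - 1)
      else \<Sum>A mod (n - 1))"

lemma KC2_colouring_pair:
  assumes "x \<noteq> y"
  shows "KC2_colouring n {x, y} =
    (if odd n then (x + y) mod n
     else (if x = n then 2 * y else if y = n then 2 * x else x + y) mod (n - 1))"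
  using assms unfolding KC2_colouring_def by auto

lemma KC2_colouring_proper:
  assumes "n \<ge> 4"
  shows "proper_colouring (KC_V n 2) KC_E (if even n then n - 1 else n) (KC2_colouring n)"
  unfolding proper_colouring_def
proof (intro conjI ballI impI)
  fix A
  show "KC2_colouring n A < (if even n then n - 1 else n)"
    using assms unfolding KC2_colouring_def by auto
next
  fix A B assume "A \<in> KC_V n 2" "B \<in> KC_V n 2" "KC_E A B"
  then obtain x y z where xyz: "A = {x, y}" "B = {x, z}" "distinct [x, y, z]" "{x, y, z} \<subseteq> {1..n}"
    by (rule KC_edge_cases)
  show "KC2_colouring n A \<noteq> KC2_colouring n B"
  proof (cases "even n")
    case False
    then have "\<not> [x + y = x + z] (mod n)"
      using xyz cong_imp_eq_in_range[of y z n] by (auto simp: cong_add_lcancel_nat)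
    then show ?thesis
      using xyz False by (simp add: KC2_colouring_pair cong_def)
  next
    case True
    have "KC2_colouring n {x, w} =
        (if x = n then 2 * w else if w = n then 2 * x else x + w) mod (n - 1)" if "x \<noteq> w" for w
      using KC2_colouring_pair[OF that] True by simp
    then show ?thesis
      using xyz round_robin_colours_differ[OF True _ xyz(3,4)] assms by (simp add: cong_def)
  qed
qed

lemma KC2_strongly_1_shallow_minor:
  assumes "n \<ge> 4"
  shows "strongly_1_shallow_minor (KC_V n 2) KC_E n"
proof -
  define v where "v i = {i + 1, n}" for i
  define L where "L = {A \<in> KC_V (n - 1) 2. KC_E {1, 2} A}"
  have L_sub: "L \<subseteq> KC_V n 2"
    using KC_V_mono[of "n - 1" n 2] unfolding L_def by auto
  have n_notin_L: "n \<notin> l" if "l \<in> L" for l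
  proof -
    have "n \<notin> {1..n - 1}" using assms by simp
    then show ?thesis using that unfolding L_def KC_V_def by blast
  qed
  have leaf: "{x, y} \<in> L" if "x \<in> {1, 2}" "y \<in> {3..n - 1}" for x y
  proof -
    have "x \<noteq> y" "x \<in> {1..n - 1}" "y \<in> {1..n - 1}" "y \<notin> {1, 2}"
      using that assms by auto
    then have "{x, y} \<in> KC_V (n - 1) 2" "{1, 2} \<noteq> {x, y}"
      using that by (auto simp: doubleton_in_KC_V doubleton_eq_iff)
    then show ?thesis
      using that unfolding L_def KC_E_def by blast
  qed
  have v_in: "v i \<in> KC_V n 2" if "i < n - 1" for i
    using that unfolding v_def by (subst doubleton_in_KC_V) auto
  have "inj_on v {..<n - 1}"
    unfolding v_def by (rule inj_onI) (auto simp: doubleton_eq_iff)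
  moreover have "KC_E (v i) (v j)" if "i \<noteq> j" for i j
    using that unfolding v_def KC_E_def by (auto simp: doubleton_eq_iff)
  moreover have "{1, 2} \<in> KC_V n 2" "{1, 2} \<notin> L" "\<forall>l\<in>L. KC_E {1, 2} l"
    using assms unfolding L_def KC_E_def by (auto simp: doubleton_in_KC_V)
  moreover have "{1, 3} \<in> L"
    using assms by (intro leaf) auto
  moreover have "v i \<notin> insert {1, 2} L" for i
    using assms n_notin_L unfolding v_def by (auto simp: doubleton_eq_iff)
  moreover have "\<exists>l\<in>L. KC_E (v i) l" if "i < n - 1" for i
  proof -
    have "\<exists>l\<in>L. i + 1 \<in> l"
    proof (cases "i + 1 \<le> 2")
      case True
      then have "{i + 1, 3} \<in> L" using assms by (intro leaf) auto
      then show ?thesis by blast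
    next
      case False
      then show ?thesis using that leaf[of 1 "i + 1"] by auto
    qed
    then show ?thesis
      using n_notin_L unfolding v_def KC_E_def by blast
  qed
  ultimately have "strongly_1_shallow_minor (KC_V n 2) KC_E (Suc (n - 1))"
    using v_in L_sub by (intro strongly_1_shallow_minor_clique_star) (auto intro: KC_E_sym)
  then show ?thesis
    using assms by simp
qed

theorem lemma2p3:
  fixes n :: nat
  assumes "n \<ge> 4"
  shows "chromatic_number (KC_V n 2) KC_E \<le> h_o (KC_V n 2) KC_E \<and>
         (let t = (if even n then n - 1 else n) in
            t = chromatic_number (KC_V n 2) KC_E \<and>
            strongly_1_shallow_minor (KC_V n 2) KC_E t)"
proof -
  define t where "t = (if even n then n - 1 else n)"
  have chi: "chromatic_number (KC_V n 2) KC_E = t"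
    unfolding t_def
  proof (rule chromatic_number_eqI[OF KC2_colouring_proper[OF assms]])
    fix q f
    assume "proper_colouring (KC_V n 2) KC_E q f"
    then show "(if even n then n - 1 else n) \<le> q"
      by (rule KC2_colours_lower_bound) (use assms in simp)
  qed
  have minor: "strongly_1_shallow_minor (KC_V n 2) KC_E t"
    using KC2_strongly_1_shallow_minor[OF assms]
    by (rule strongly_1_shallow_minor_mono) (simp add: t_def)
  have "t \<le> h_o (KC_V n 2) KC_E"
    using le_h_oI[OF finite_KC_V strongly_1_shallow_minor_imp_signed_minor[OF minor KC_E_sym]] .
  then show ?thesis
    using chi minor unfolding t_def Let_def by simp
qed

end
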